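(* Let $\mathtt{L}=\{x,(x,u'),u'\}$ be a line of $\mathbb{S}$, where $(x,u')\in\mathcal{P}$, and let $\alpha$ be a point of $\mathbb{S}$ not on $\mathtt{L}$. Then there is exactly one point of $\mathtt{L}$ nearest to $\alpha$ (in the collinearity graph of $\mathbb{S}$).
   Context: Let $S=(P,L)$ and $S'=(P',L')$ be generalized quadrangles of order $(2,2)$ (every line has 3 points, every point lies on 3 lines, and for each point $x$ and line $l\not\ni x$ exactly one point of $l$ is collinear with $x$), with an isomorphism $x\mapsto x'$ from $S$ to $S'$. In a point-line geometry, $x^{\perp}$ is $x$ together with all points collinear with $x$, and $A^{\perp}=\bigcap_{a\in A}a^{\perp}$. A triad is a set of three pairwise non-collinear points, complete if $|T^{\perp}|=3$. Let $\mathcal{P}=\{(x,y')\in P\times P':y'\in x'^{\perp}\}$ and $\mathcal{L}$ the set of all $3$-subsets $\{(x,u'),(y,v'),(z,w')\}$ of $\mathcal{P}$ where $T=\{x,y,z\}$ (three distinct points) is a line or complete triad of $S$ and $\{u',v',w'\}=T'^{\perp}$ in $S'$ with $u',v',w'$ distinct. The geometry $\mathbb{S}=(\mathbb{P},\mathbb{L})$ has point set $\mathbb{P}=\mathcal{P}\cup P\cup P'$ (disjoint union) and line set $\mathcal{L}\cup\{\{x,(x,u'),u'\}:(x,u')\in\mathcal{P}\}$. *)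

theory Defs
  imports Main "HOL-Library.Extended_Nat"
begin

definition collinear :: "'a set \<Rightarrow> 'a set set \<Rightarrow> 'a \<Rightarrow> 'a \<Rightarrow> bool" where
  "collinear P L x y \<longleftrightarrow> x \<noteq> y \<and> x \<in> P \<and> y \<in> P \<and> (\<exists>l\<in>L. x \<in> l \<and> y \<in> l)"

definition perp :: "'a set \<Rightarrow> 'a set set \<Rightarrow> 'a \<Rightarrow> 'a set" where
  "perp P L x = {y \<in> P. y = x \<or> collinear P L x y}"

definition perpset :: "'a set \<Rightarrow> 'a set set \<Rightarrow> 'a set \<Rightarrow> 'a set" where
  "perpset P L A = {y \<in> P. \<forall>a\<in>A. y \<in> perp P L a}"

definition GQ22 :: "'a set \<Rightarrow> 'a set set \<Rightarrow> bool" where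
  "GQ22 P L \<longleftrightarrow> (\<forall>l\<in>L. l \<subseteq> P \<and> card l = 3)
     \<and> (\<forall>x\<in>P. card {l\<in>L. x \<in> l} = 3)
     \<and> (\<forall>x\<in>P. \<forall>l\<in>L. x \<notin> l \<longrightarrow> (\<exists>!y. y \<in> l \<and> collinear P L x y))"

definition geom_iso :: "('a \<Rightarrow> 'b) \<Rightarrow> 'a set \<Rightarrow> 'a set set \<Rightarrow> 'b set \<Rightarrow> 'b set set \<Rightarrow> bool" where
  "geom_iso f P L P' L' \<longleftrightarrow> bij_betw f P P' \<and> (image f) ` L = L'"

definition triad :: "'a set \<Rightarrow> 'a set set \<Rightarrow> 'a set \<Rightarrow> bool" where
  "triad P L T \<longleftrightarrow> T \<subseteq> P \<and> card T = 3 \<and> (\<forall>a\<in>T. \<forall>b\<in>T. a \<noteq> b \<longrightarrow> \<not> collinear P L a b)"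

definition complete_triad :: "'a set \<Rightarrow> 'a set set \<Rightarrow> 'a set \<Rightarrow> bool" where
  "complete_triad P L T \<longleftrightarrow> triad P L T \<and> card (perpset P L T) = 3"

datatype ('a, 'b) spoint = PP 'a 'b | PA 'a | PB 'b

definition calP :: "'a set \<Rightarrow> 'b set \<Rightarrow> 'b set set \<Rightarrow> ('a \<Rightarrow> 'b) \<Rightarrow> ('a \<times> 'b) set" where
  "calP P P' L' f = {(x, y). x \<in> P \<and> y \<in> perp P' L' (f x)}"

definition calL :: "'a set \<Rightarrow> 'a set set \<Rightarrow> 'b set \<Rightarrow> 'b set set \<Rightarrow> ('a \<Rightarrow> 'b)
    \<Rightarrow> ('a, 'b) spoint set set" where
  "calL P L P' L' f = {{PP x u, PP y v, PP z w} | x y z u v w.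
      (x, u) \<in> calP P P' L' f \<and> (y, v) \<in> calP P P' L' f \<and> (z, w) \<in> calP P P' L' f
      \<and> x \<noteq> y \<and> y \<noteq> z \<and> x \<noteq> z
      \<and> ({x, y, z} \<in> L \<or> complete_triad P L {x, y, z})
      \<and> {u, v, w} = perpset P' L' (f ` {x, y, z})
      \<and> u \<noteq> v \<and> v \<noteq> w \<and> u \<noteq> w}"

definition bbP :: "'a set \<Rightarrow> 'b set \<Rightarrow> 'b set set \<Rightarrow> ('a \<Rightarrow> 'b) \<Rightarrow> ('a, 'b) spoint set" where
  "bbP P P' L' f = (\<lambda>(x, y). PP x y) ` calP P P' L' f \<union> PA ` P \<union> PB ` P'"

definition bbL :: "'a set \<Rightarrow> 'a set set \<Rightarrow> 'b set \<Rightarrow> 'b set set \<Rightarrow> ('a \<Rightarrow> 'b)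
    \<Rightarrow> ('a, 'b) spoint set set" where
  "bbL P L P' L' f = calL P L P' L' f
     \<union> {{PA x, PP x u, PB u} | x u. (x, u) \<in> calP P P' L' f}"

definition coll_rel :: "'a set \<Rightarrow> 'a set set \<Rightarrow> ('a \<times> 'a) set" where
  "coll_rel P L = {(x, y). collinear P L x y}"

text \<open>Graph distance (infinite if no path exists).\<close>
definition gdist :: "'a set \<Rightarrow> 'a set set \<Rightarrow> 'a \<Rightarrow> 'a \<Rightarrow> enat" where
  "gdist P L a b = (INF n \<in> {n. (a, b) \<in> coll_rel P L ^^ n}. enat n)"

end

theory Submission
  imports Defs
begin

text \<open>
  Write x' for f x. Collinearity in SS is explicit: x is collinear with u' iff (x, u') is a point,
  x with a point (y, v') iff y = x, dually for u', no two points of P (or of P') are collinear,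
  and (x, u'), (y, v') are collinear iff x \<noteq> y, u' \<noteq> v' and u', v' \<in> {x', y'}-perp. For the
  last claim, {x', y'} lies on a line or, because in GQ(2,2) a non-collinear pair has exactly
  three common neighbours and is regular, in a complete triad whose perp contains u', v'.
  A case distinction on \<alpha> then shows that the distances from \<alpha> to the three points of the line
  are k, k + 1, k + 1 in some order with k = 1 or k = 2. Regularity is needed once more to show
  that (y, v') and (x, u') have no common neighbour if v' \<in> x'-perp but u' \<notin> y'-perp.
\<close>

lemma collinear_sym: "collinear P L a b \<Longrightarrow> collinear P L b a"
  unfolding collinear_def by blast

definition unique_nearest :: "'p set \<Rightarrow> 'p set set \<Rightarrow> 'p \<Rightarrow> 'p set \<Rightarrow> bool" where
  "unique_nearest P L \<alpha> M \<longleftrightarrow> (\<exists>!p. p \<in> M \<and> (\<forall>q\<in>M. gdist P L \<alpha> p \<le> gdist P L \<alpha> q))"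

lemma gdist_le: "(a, b) \<in> coll_rel P L ^^ n \<Longrightarrow> gdist P L a b \<le> enat n"
  unfolding gdist_def by (rule INF_lower) simp

lemma gdist_ge_Suc:
  assumes "\<And>n. n \<le> k \<Longrightarrow> (a, b) \<notin> coll_rel P L ^^ n"
  shows "enat (Suc k) \<le> gdist P L a b"
  unfolding gdist_def by (rule INF_greatest) (use assms not_less_eq_eq in auto)

lemma ex1_strict_minimum:
  fixes d :: "'x \<Rightarrow> 'c::linorder"
  assumes "p \<in> M" and "\<And>q. q \<in> M \<Longrightarrow> q \<noteq> p \<Longrightarrow> d p < d q"
  shows "\<exists>!p. p \<in> M \<and> (\<forall>q\<in>M. d p \<le> d q)"
  using assms by (metis order.order_iff_strict not_le)

lemma unique_nearest_if_gdist:
  assumes "p \<in> M" "gdist P L \<alpha> p \<le> enat k"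
    and "\<And>q. q \<in> M \<Longrightarrow> q \<noteq> p \<Longrightarrow> enat (Suc k) \<le> gdist P L \<alpha> q"
  shows "unique_nearest P L \<alpha> M"
  unfolding unique_nearest_def
proof (rule ex1_strict_minimum[OF assms(1)])
  fix q assume "q \<in> M" "q \<noteq> p"
  have "enat k < enat (Suc k)"
    by simp
  then show "gdist P L \<alpha> p < gdist P L \<alpha> q"
    using assms(2) assms(3)[OF \<open>q \<in> M\<close> \<open>q \<noteq> p\<close>] by (meson order.strict_trans1 order.strict_trans2)
qed

lemma unique_nearest_collinear:
  assumes "p \<in> M" "collinear P L \<alpha> p"
    and "\<And>q. q \<in> M \<Longrightarrow> q \<noteq> p \<Longrightarrow> q \<noteq> \<alpha> \<and> \<not> collinear P L \<alpha> q"
  shows "unique_nearest P L \<alpha> M"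
proof (rule unique_nearest_if_gdist[OF assms(1), of _ _ _ 1])
  show "gdist P L \<alpha> p \<le> enat 1"
    by (rule gdist_le) (simp add: coll_rel_def assms(2))
  fix q assume "q \<in> M" "q \<noteq> p"
  then show "enat (Suc 1) \<le> gdist P L \<alpha> q"
    using assms(3)[of q] by (intro gdist_ge_Suc) (auto simp: coll_rel_def le_Suc_eq)
qed

lemma unique_nearest_common_neighbour:
  assumes "p \<in> M" "collinear P L \<alpha> c" "collinear P L c p"
    and "\<And>q. q \<in> M \<Longrightarrow> q \<noteq> p \<Longrightarrow> q \<noteq> \<alpha> \<and> \<not> collinear P L \<alpha> q"
    and "\<And>q d. q \<in> M \<Longrightarrow> q \<noteq> p \<Longrightarrow> \<not> (collinear P L \<alpha> d \<and> collinear P L d q)"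
  shows "unique_nearest P L \<alpha> M"
proof (rule unique_nearest_if_gdist[OF assms(1), of _ _ _ 2])
  show "gdist P L \<alpha> p \<le> enat 2"
    by (rule gdist_le) (use assms(2,3) in \<open>auto simp: coll_rel_def numeral_2_eq_2\<close>)
  fix q assume "q \<in> M" "q \<noteq> p"
  then show "enat (Suc 2) \<le> gdist P L \<alpha> q"
    using assms(4,5)[of q] by (intro gdist_ge_Suc) (auto simp: coll_rel_def numeral_2_eq_2 le_Suc_eq)
qed

locale gq22 =
  fixes P :: "'a set" and L :: "'a set set"
  assumes GQ22: "GQ22 P L"
begin

abbreviation col :: "'a \<Rightarrow> 'a \<Rightarrow> bool" where "col \<equiv> collinear P L"

definition orth :: "'a \<Rightarrow> 'a \<Rightarrow> bool" where "orth a b \<longleftrightarrow> b \<in> perp P L a"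

lemma line_subset: "l \<in> L \<Longrightarrow> l \<subseteq> P"
  using GQ22 unfolding GQ22_def by blast

lemma card_line: "l \<in> L \<Longrightarrow> card l = 3"
  using GQ22 unfolding GQ22_def by blast

lemma finite_line: "l \<in> L \<Longrightarrow> finite l"
  using card_line by (intro card_ge_0_finite) simp

lemma card_lines_through: "a \<in> P \<Longrightarrow> card {l\<in>L. a \<in> l} = 3"
  using GQ22 unfolding GQ22_def by blast

lemma finite_lines_through: "a \<in> P \<Longrightarrow> finite {l\<in>L. a \<in> l}"
  using card_lines_through by (intro card_ge_0_finite) simp

lemma unique_col_on_line: "a \<in> P \<Longrightarrow> l \<in> L \<Longrightarrow> a \<notin> l \<Longrightarrow> \<exists>!y. y \<in> l \<and> col a y"
  using GQ22 unfolding GQ22_def by simp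

lemma exists_col_on_line: "a \<in> P \<Longrightarrow> l \<in> L \<Longrightarrow> a \<notin> l \<Longrightarrow> \<exists>y\<in>l. col a y"
  using unique_col_on_line by blast

lemma eq_if_col_on_line:
  "\<lbrakk>a \<in> P; l \<in> L; a \<notin> l; y \<in> l; z \<in> l; col a y; col a z\<rbrakk> \<Longrightarrow> y = z"
  using unique_col_on_line by blast

lemma col_iff: "col a b \<longleftrightarrow> a \<noteq> b \<and> a \<in> P \<and> b \<in> P \<and> (\<exists>l\<in>L. a \<in> l \<and> b \<in> l)"
  by (simp add: collinear_def)

lemma orth_iff: "orth a b \<longleftrightarrow> a \<in> P \<and> b \<in> P \<and> (a = b \<or> col a b)"
  unfolding orth_def perp_def col_iff by blast

lemma perpset_eq: "perpset P L A = {y\<in>P. \<forall>a\<in>A. orth a y}"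
  unfolding perpset_def orth_def by blast

lemma orth_sym: "orth a b \<Longrightarrow> orth b a"
  unfolding orth_iff col_iff by blast

lemma orth_refl: "a \<in> P \<Longrightarrow> orth a a"
  unfolding orth_iff by blast

lemma orth_if_col: "col a b \<Longrightarrow> orth a b"
  unfolding orth_iff col_iff by blast

lemma col_if_orth: "orth a b \<Longrightarrow> a \<noteq> b \<Longrightarrow> col a b"
  unfolding orth_iff by blast

lemma orth_on_line: "l \<in> L \<Longrightarrow> a \<in> l \<Longrightarrow> b \<in> l \<Longrightarrow> orth a b"
  using line_subset unfolding orth_iff col_iff by blast

lemma col_on_line: "l \<in> L \<Longrightarrow> a \<in> l \<Longrightarrow> b \<in> l \<Longrightarrow> a \<noteq> b \<Longrightarrow> col a b"
  using line_subset unfolding col_iff by blast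

lemma exists_line_through: "a \<in> P \<Longrightarrow> \<exists>l\<in>L. a \<in> l"
proof (rule ccontr)
  assume "a \<in> P" "\<not> (\<exists>l\<in>L. a \<in> l)"
  then have "{l\<in>L. a \<in> l} = {}"
    by blast
  then show False
    using card_lines_through[OF \<open>a \<in> P\<close>] by (metis card.empty zero_neq_numeral)
qed

lemma exists_line_if_orth: "orth a b \<Longrightarrow> \<exists>l\<in>L. a \<in> l \<and> b \<in> l"
  unfolding orth_iff col_iff using exists_line_through by auto

lemma mem_line_if_orth:
  assumes "l \<in> L" "a \<in> l" "b \<in> l" "a \<noteq> b" "orth c a" "orth c b"
  shows "c \<in> l"
proof (rule ccontr)
  assume "c \<notin> l"
  with assms have "col c a" "col c b"
    using col_if_orth by blast+
  then show False
    using eq_if_col_on_line[OF _ assms(1) \<open>c \<notin> l\<close> assms(2,3)] assms(4) col_iff by blast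
qed

lemma line_eq:
  assumes "l \<in> L" "m \<in> L" "a \<in> l" "b \<in> l" "a \<in> m" "b \<in> m" "a \<noteq> b"
  shows "l = m"
proof -
  have "m \<subseteq> l"
  proof
    fix c assume "c \<in> m"
    then show "c \<in> l"
      using mem_line_if_orth[OF assms(1,3,4,7)] orth_on_line[OF assms(2)] assms(5,6) by blast
  qed
  then show ?thesis
    using card_subset_eq[OF finite_line] card_line assms(1,2) by metis
qed

lemma line_eq_three:
  assumes "l \<in> L" "a \<in> l" "b \<in> l" "c \<in> l" "a \<noteq> b" "a \<noteq> c" "b \<noteq> c"
  shows "l = {a, b, c}"
proof -
  have "{a, b, c} \<subseteq> l" "card {a, b, c} = card l"
    using assms card_line by auto
  from card_subset_eq[OF finite_line[OF assms(1)] this] show ?thesis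
    by simp
qed

lemma exists_third_point: "l \<in> L \<Longrightarrow> \<exists>c\<in>l. c \<noteq> a \<and> c \<noteq> b"
  using card_line[of l] unfolding card_3_iff by auto

lemma perpset_line:
  assumes l: "l \<in> L"
  shows "perpset P L l = l"
proof
  obtain a b where ab: "a \<in> l" "b \<in> l" "a \<noteq> b"
    using card_line[OF l] unfolding card_3_iff by blast
  show "perpset P L l \<subseteq> l"
    using mem_line_if_orth[OF l ab] ab orth_sym unfolding perpset_eq by blast
  show "l \<subseteq> perpset P L l"
    using line_subset[OF l] orth_on_line[OF l] unfolding perpset_eq by blast
qed

lemma exists_line_through_avoiding:
  assumes "a \<in> P" "b \<noteq> a" "c \<noteq> a"
  shows "\<exists>m\<in>L. a \<in> m \<and> b \<notin> m \<and> c \<notin> m"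
proof -
  have "\<exists>l. \<forall>m\<in>L. a \<in> m \<and> d \<in> m \<longrightarrow> m = l" if "d \<noteq> a" for d
    using line_eq that by metis
  then obtain lb lc where lb: "\<forall>m\<in>L. a \<in> m \<and> b \<in> m \<longrightarrow> m = lb"
    and lc: "\<forall>m\<in>L. a \<in> m \<and> c \<in> m \<longrightarrow> m = lc"
    using assms(2,3) by metis
  have "\<not> {l\<in>L. a \<in> l} \<subseteq> {lb, lc}"
  proof
    assume "{l\<in>L. a \<in> l} \<subseteq> {lb, lc}"
    then have "card {l\<in>L. a \<in> l} \<le> card {lb, lc}"
      by (intro card_mono) auto
    also have "\<dots> \<le> 2"
      by (cases "lb = lc") auto
    finally show False
      using card_lines_through[OF assms(1)] by simp
  qed
  then show ?thesis
    using lb lc by blast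
qed

lemma exists_common_orth:
  assumes "a \<in> P" "b \<in> P"
  shows "\<exists>c. orth a c \<and> orth b c"
proof (cases "orth a b")
  case True
  then show ?thesis
    using orth_refl assms(2) by blast
next
  case False
  obtain l where l: "l \<in> L" "a \<in> l"
    using exists_line_through assms(1) by blast
  then have "b \<notin> l"
    using False orth_on_line by blast
  then obtain c where "c \<in> l" "col b c"
    using exists_col_on_line l(1) assms(2) by blast
  then show ?thesis
    using orth_on_line[OF l] orth_if_col by blast
qed

lemma common_orth_not_orth:
  assumes "\<not> orth a b" "orth a p" "orth b p" "orth a q" "orth b q" "p \<noteq> q"
  shows "\<not> orth p q"
proof
  assume "orth p q"
  then obtain l where l: "l \<in> L" "p \<in> l" "q \<in> l"
    using exists_line_if_orth by blast
  then have "a \<in> l" "b \<in> l"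
    using mem_line_if_orth[OF l assms(6)] assms(2-5) orth_sym by blast+
  then show False
    using assms(1) orth_on_line l(1) by blast
qed

lemma coclique_in_neighbourhood:
  assumes C: "\<forall>c\<in>C. col r c" and coclique: "\<forall>c\<in>C. \<forall>d\<in>C. c \<noteq> d \<longrightarrow> \<not> orth c d"
  shows "finite C \<and> card C \<le> 3"
proof (cases "C = {}")
  case False
  then have r: "r \<in> P"
    using C unfolding col_iff by blast
  let ?Lr = "{l\<in>L. r \<in> l}"
  have C_eq: "C = (\<Union>l\<in>?Lr. l \<inter> C)"
    using C unfolding col_iff by blast
  have fin: "finite (l \<inter> C)" if "l \<in> ?Lr" for l
    using finite_line that by blast
  have le1: "card (l \<inter> C) \<le> 1" if l: "l \<in> ?Lr" for l
  proof -
    have "\<forall>c\<in>l \<inter> C. \<forall>d\<in>l \<inter> C. c = d"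
      using coclique orth_on_line l by blast
    then show ?thesis
      using card_le_Suc0_iff_eq[OF fin[OF l]] by simp
  qed
  have "finite C"
    by (subst C_eq) (intro finite_UN_I finite_lines_through[OF r] fin)
  moreover have "card C \<le> (\<Sum>l\<in>?Lr. card (l \<inter> C))"
    using card_UN_le[OF finite_lines_through[OF r], of "\<lambda>l. l \<inter> C"]
    unfolding C_eq[symmetric] .
  moreover have "(\<Sum>l\<in>?Lr. card (l \<inter> C)) \<le> (\<Sum>l\<in>?Lr. 1)"
    by (rule sum_mono) (rule le1)
  moreover have "(\<Sum>l\<in>?Lr. 1::nat) = 3"
    using card_lines_through[OF r] by simp
  ultimately show ?thesis
    by linarith
qed simp

lemma common_orth_eq:
  assumes ab: "\<not> orth a b" and pqr: "p \<noteq> q" "p \<noteq> r" "q \<noteq> r"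
    and "orth a p" "orth b p" "orth a q" "orth b q" "orth a r" "orth b r"
  shows "{c. orth a c \<and> orth b c} = {p, q, r}"
proof -
  let ?C = "{c. orth a c \<and> orth b c}"
  have "\<forall>c\<in>?C. col a c"
    using ab col_if_orth orth_sym by blast
  moreover have "\<forall>c\<in>?C. \<forall>d\<in>?C. c \<noteq> d \<longrightarrow> \<not> orth c d"
    using common_orth_not_orth[OF ab] by blast
  ultimately have "finite ?C" "card ?C \<le> 3"
    using coclique_in_neighbourhood by blast+
  moreover have "{p, q, r} \<subseteq> ?C" "card {p, q, r} = 3"
    using assms by auto
  ultimately show ?thesis
    using card_seteq by metis
qed

lemma exists_third_common_orth:
  assumes ab: "\<not> orth a b" and "u \<noteq> w" "orth a u" "orth b u" "orth a w" "orth b w"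
  shows "\<exists>s. orth a s \<and> orth b s \<and> s \<noteq> u \<and> s \<noteq> w"
proof -
  have "a \<in> P" "b \<in> P" "u \<noteq> a" "w \<noteq> a"
    using assms orth_iff orth_sym by blast+
  then obtain m where m: "m \<in> L" "a \<in> m" "u \<notin> m" "w \<notin> m"
    using exists_line_through_avoiding by blast
  then have "b \<notin> m"
    using ab orth_on_line by blast
  then obtain s where "s \<in> m" "col b s"
    using exists_col_on_line m(1) \<open>b \<in> P\<close> by blast
  then show ?thesis
    using m orth_on_line orth_if_col by blast
qed

lemma not_orth_off_line:
  "\<lbrakk>l \<in> L; p \<in> l; s \<in> l; p \<noteq> s; orth c p; c \<notin> l\<rbrakk> \<Longrightarrow> \<not> orth c s"
  using mem_line_if_orth by blast

text \<open>Otherwise r would be collinear with the pairwise non-collinear points a, b, s' and the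
  point s3 of the line qs collinear with r, but r lies on only three lines.\<close>
lemma same_projection_on_line:
  assumes ab: "\<not> orth a b" and pqr: "p \<noteq> q" "p \<noteq> r" "q \<noteq> r"
    and ap: "orth a p" "orth b p" and aq: "orth a q" "orth b q" and ar: "orth a r" "orth b r"
    and m: "m \<in> L" "p \<in> m" "a \<notin> m" "b \<notin> m"
    and s: "s \<in> m" "col q s" and s': "s' \<in> m" "col r s'"
  shows "s = s'"
proof (rule ccontr)
  assume ss': "s \<noteq> s'"
  have pq: "\<not> orth p q" and pr: "\<not> orth p r" and qr: "\<not> orth q r"
    using common_orth_not_orth[OF ab] assms by blast+
  have P: "a \<in> P" "b \<in> P" "r \<in> P" "s' \<in> P"
    using ap ar s'(2) orth_iff col_iff by blast+
  have "q \<notin> m" "r \<notin> m" "s \<noteq> p" "s' \<noteq> p"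
    using pq pr orth_on_line[OF m(1,2)] s(2) s'(2) orth_if_col orth_sym by blast+
  obtain n where n: "n \<in> L" "q \<in> n" "s \<in> n"
    using exists_line_if_orth[OF orth_if_col[OF s(2)]] by blast
  have "r \<notin> n"
    using qr orth_on_line[OF n(1,2)] by blast
  then obtain s3 where s3: "s3 \<in> n" "col r s3"
    using exists_col_on_line n(1) P(3) by blast
  have "q \<noteq> s3" "s3 \<in> P"
    using s3(2) qr orth_if_col orth_sym col_iff by blast+
  have "a \<notin> n" "b \<notin> n"
    using not_orth_off_line[OF m(1,2) s(1) \<open>s \<noteq> p\<close>[symmetric]] orth_on_line[OF n(1) _ n(3)] ap m(3,4)
    by blast+
  then have "\<not> orth a s'" "\<not> orth b s'" "\<not> orth a s3" "\<not> orth b s3"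
    using not_orth_off_line[OF m(1,2) s'(1) \<open>s' \<noteq> p\<close>[symmetric]]
      not_orth_off_line[OF n(1,2) s3(1) \<open>q \<noteq> s3\<close>] ap aq m(3,4) by blast+
  moreover have "\<not> orth s' s3"
  proof
    assume "orth s' s3"
    then have "s3 \<in> m"
      using mem_line_if_orth[OF m(1) s(1) s'(1) ss'] orth_on_line[OF n(1) s3(1) n(3)] orth_sym
      by blast
    then have "s3 = s'"
      using eq_if_col_on_line[OF P(3) m(1) \<open>r \<notin> m\<close> _ s'(1) s3(2) s'(2)] by blast
    then show False
      using line_eq[OF m(1) n(1) s(1) s'(1) n(3)] s3(1) ss' \<open>q \<notin> m\<close> n(2) by blast
  qed
  ultimately have "\<forall>c\<in>{a, b, s', s3}. \<forall>d\<in>{a, b, s', s3}. c \<noteq> d \<longrightarrow> \<not> orth c d"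
    and "distinct [a, b, s', s3]"
    using ab orth_sym orth_refl P \<open>s3 \<in> P\<close> by (blast, auto)
  moreover have "\<forall>c\<in>{a, b, s', s3}. col r c"
    using ar s'(2) s3(2) col_if_orth orth_sym ab by blast
  ultimately show False
    using coclique_in_neighbourhood[of "{a, b, s', s3}" r] by simp
qed

lemma exists_third_centre:
  assumes ab: "\<not> orth a b" and pqr: "p \<noteq> q" "p \<noteq> r" "q \<noteq> r"
    and ap: "orth a p" "orth b p" and aq: "orth a q" "orth b q" and ar: "orth a r" "orth b r"
  shows "\<exists>c. c \<noteq> a \<and> c \<noteq> b \<and> orth c p \<and> orth c q \<and> orth c r"
proof -
  have "\<not> orth p q" "\<not> orth p r"
    using common_orth_not_orth[OF ab] assms by blast+
  moreover have P: "a \<in> P" "b \<in> P" "p \<in> P" "q \<in> P" "r \<in> P"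
    using ap aq ar orth_iff by blast+
  moreover have "a \<noteq> p" "b \<noteq> p"
    using ab ap orth_sym by blast+
  ultimately obtain m where m: "m \<in> L" "p \<in> m" "a \<notin> m" "b \<notin> m" "q \<notin> m" "r \<notin> m"
    using exists_line_through_avoiding orth_on_line by metis
  then obtain s s' where s: "s \<in> m" "col q s" and s': "s' \<in> m" "col r s'"
    using exists_col_on_line P(4,5) by meson
  have "s = s'"
    by (rule same_projection_on_line[OF assms m(1-4) s s'])
  then have "orth s p" "orth s q" "orth s r" "s \<noteq> a" "s \<noteq> b"
    using orth_on_line[OF m(1) s(1) m(2)] orth_if_col s(2) s'(2) orth_sym m(3,4) s(1) by blast+
  then show ?thesis
    by blast
qed

text \<open>Regularity of GQ(2,2): if v, w are not collinear, {v, w}-perp consists of x, z and the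
  third centre of {u, v, w}.\<close>
lemma grid_completion:
  assumes xyz: "x \<noteq> y" "x \<noteq> z" "y \<noteq> z" and uvw: "u \<noteq> v" "u \<noteq> w" "v \<noteq> w"
    and x: "orth x u" "orth x v" "orth x w" and z: "orth z u" "orth z v" "orth z w"
    and y: "orth y v" "orth y w"
  shows "orth y u"
proof (cases "orth v w")
  case True
  then obtain l where l: "l \<in> L" "v \<in> l" "w \<in> l"
    using exists_line_if_orth by blast
  then have "x \<in> l" "z \<in> l" "y \<in> l"
    using mem_line_if_orth[OF l uvw(3)] x(2,3) z(2,3) y by blast+
  then have "u \<in> l"
    using mem_line_if_orth[OF l(1) _ _ xyz(2)] x(1) z(1) orth_sym by blast
  then show ?thesis
    using orth_on_line[OF l(1) \<open>y \<in> l\<close>] by blast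
next
  case False
  have xz: "\<not> orth x z"
  proof
    assume "orth x z"
    then obtain l where l: "l \<in> L" "x \<in> l" "z \<in> l"
      using exists_line_if_orth by blast
    then have "v \<in> l" "w \<in> l"
      using mem_line_if_orth[OF l xyz(2)] x(2,3) z(2,3) orth_sym by blast+
    then show False
      using False orth_on_line[OF l(1)] by blast
  qed
  obtain c where c: "c \<noteq> x" "c \<noteq> z" "orth c u" "orth c v" "orth c w"
    using exists_third_centre[OF xz uvw x(1) z(1) x(2) z(2) x(3) z(3)] by blast
  have "{d. orth v d \<and> orth w d} = {x, z, c}"
    using common_orth_eq[OF False xyz(2) c(1,2)[symmetric]] x(2,3) z(2,3) c(4,5) orth_sym
    by blast
  then have "y \<in> {x, z, c}"
    using y orth_sym by blast
  then show ?thesis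
    using x(1) z(1) c(3) by blast
qed

lemma exists_bridge:
  assumes "orth x u" "orth y v" "\<not> orth x v" "\<not> orth y u"
  shows "\<exists>z w. orth z u \<and> orth z v \<and> orth x w \<and> orth y w \<and> orth z w"
proof -
  obtain l where l: "l \<in> L" "x \<in> l" "u \<in> l"
    using exists_line_if_orth assms(1) by blast
  have "v \<notin> l" "y \<notin> l"
    using assms(3,4) orth_on_line[OF l(1)] l orth_sym by blast+
  moreover have "v \<in> P" "y \<in> P"
    using assms(2) orth_iff by blast+
  ultimately obtain z w where "z \<in> l" "col v z" "w \<in> l" "col y w"
    using exists_col_on_line l(1) by meson
  then show ?thesis
    using orth_on_line[OF l(1)] l orth_if_col orth_sym by blast
qed

lemma exists_complete_triad:
  assumes ab: "\<not> orth a b" and uv: "u \<noteq> v"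
    and au: "orth a u" "orth b u" and av: "orth a v" "orth b v"
  shows "\<exists>c s. c \<noteq> a \<and> c \<noteq> b \<and> s \<noteq> u \<and> s \<noteq> v
    \<and> complete_triad P L {a, b, c} \<and> perpset P L {a, b, c} = {u, v, s}"
proof -
  obtain s where s: "orth a s" "orth b s" "s \<noteq> u" "s \<noteq> v"
    using exists_third_common_orth[OF ab uv au av] by blast
  obtain c where c: "c \<noteq> a" "c \<noteq> b" "orth c u" "orth c v" "orth c s"
    using exists_third_centre[OF ab uv s(3,4)[symmetric] au av s(1,2)] by blast
  have common: "{d. orth a d \<and> orth b d} = {u, v, s}"
    using common_orth_eq[OF ab uv s(3,4)[symmetric] au av s(1,2)] .
  have perp_eq: "perpset P L {a, b, c} = {u, v, s}"
  proof
    show "perpset P L {a, b, c} \<subseteq> {u, v, s}"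
      using common unfolding perpset_eq by blast
    show "{u, v, s} \<subseteq> perpset P L {a, b, c}"
      using au av s c orth_sym orth_iff unfolding perpset_eq by blast
  qed
  have "\<not> orth u v"
    using common_orth_not_orth[OF ab au av uv] .
  then have "\<not> orth a c" "\<not> orth b c"
    using common_orth_not_orth[of u v] au av c orth_sym by metis+
  then have "triad P L {a, b, c}"
    unfolding triad_def using ab c(1,2) orth_if_col orth_sym orth_iff au c(3) by auto
  moreover have "card (perpset P L {a, b, c}) = 3"
    using perp_eq uv s(3,4) by simp
  ultimately show ?thesis
    unfolding complete_triad_def using c(1,2) s(3,4) perp_eq by blast
qed

lemma exists_line_or_complete_triad:
  assumes ab: "a \<noteq> b" and uv: "u \<noteq> v"
    and au: "orth a u" "orth b u" and av: "orth a v" "orth b v"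
  shows "\<exists>c s. c \<noteq> a \<and> c \<noteq> b \<and> s \<noteq> u \<and> s \<noteq> v
    \<and> ({a, b, c} \<in> L \<or> complete_triad P L {a, b, c}) \<and> perpset P L {a, b, c} = {u, v, s}"
proof (cases "orth a b")
  case True
  then obtain l where l: "l \<in> L" "a \<in> l" "b \<in> l"
    using exists_line_if_orth by blast
  obtain c where c: "c \<in> l" "c \<noteq> a" "c \<noteq> b"
    using exists_third_point[OF l(1)] by blast
  have "u \<in> l" "v \<in> l"
    using mem_line_if_orth[OF l ab] au av orth_sym by blast+
  moreover obtain s where s: "s \<in> l" "s \<noteq> u" "s \<noteq> v"
    using exists_third_point[OF l(1)] by blast
  ultimately have "l = {u, v, s}"
    using line_eq_three[OF l(1)] uv by blast
  moreover have "l = {a, b, c}"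
    using line_eq_three[OF l(1,2,3) c(1) ab c(2,3)[symmetric]] .
  ultimately have "{a, b, c} \<in> L" "perpset P L {a, b, c} = {u, v, s}"
    using perpset_line[OF l(1)] l(1) by simp_all
  then show ?thesis
    using c(2,3) s(2,3) by blast
next
  case False
  then show ?thesis
    using exists_complete_triad[OF False uv au av] by blast
qed

end

locale gq22_iso = S: gq22 P L + T: gq22 P' L'
  for P :: "'a set" and L :: "'a set set" and P' :: "'b set" and L' :: "'b set set" +
  fixes f :: "'a \<Rightarrow> 'b"
  assumes iso: "geom_iso f P L P' L'"
begin

lemma inj_f: "inj_on f P"
  using iso unfolding geom_iso_def bij_betw_def by blast

lemma image_points: "f ` P = P'"
  using iso unfolding geom_iso_def bij_betw_def by blast

lemma image_lines: "image f ` L = L'"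
  using iso unfolding geom_iso_def by blast

lemma mem_image_line_iff:
  assumes "l \<in> L" "a \<in> P"
  shows "f a \<in> f ` l \<longleftrightarrow> a \<in> l"
  using S.line_subset[OF assms(1)] inj_f assms(2) unfolding inj_on_def by blast

lemma line_image_iff:
  assumes "A \<subseteq> P"
  shows "f ` A \<in> L' \<longleftrightarrow> A \<in> L"
proof
  assume "f ` A \<in> L'"
  then obtain l where l: "l \<in> L" "f ` A = f ` l"
    using image_lines by blast
  then show "A \<in> L"
    using inj_on_image_eq_iff[OF inj_f assms S.line_subset[OF l(1)]] by simp
next
  assume "A \<in> L"
  then show "f ` A \<in> L'"
    using image_lines by blast
qed

lemma col_image_iff:
  assumes a: "a \<in> P" and b: "b \<in> P"
  shows "T.col (f a) (f b) \<longleftrightarrow> S.col a b"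
proof
  assume "T.col (f a) (f b)"
  then obtain l' where l': "l' \<in> L'" "f a \<in> l'" "f b \<in> l'" "f a \<noteq> f b"
    unfolding T.col_iff by blast
  then obtain l where l: "l \<in> L" "l' = f ` l"
    using image_lines by blast
  then show "S.col a b"
    using l' mem_image_line_iff[OF l(1)] a b S.col_on_line[OF l(1)] by blast
next
  assume "S.col a b"
  then obtain l where l: "l \<in> L" "a \<in> l" "b \<in> l" "a \<noteq> b"
    unfolding S.col_iff by blast
  moreover have "f a \<noteq> f b"
    using inj_f a b l(4) unfolding inj_on_def by blast
  ultimately show "T.col (f a) (f b)"
    using T.col_on_line[of "f ` l"] image_lines by blast
qed

lemma orth_image_iff: "a \<in> P \<Longrightarrow> b \<in> P \<Longrightarrow> T.orth (f a) (f b) \<longleftrightarrow> S.orth a b"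
  using col_image_iff image_points inj_f unfolding S.orth_iff T.orth_iff inj_on_def by blast

lemma perpset_image:
  assumes A: "A \<subseteq> P"
  shows "perpset P' L' (f ` A) = f ` perpset P L A"
proof
  show "perpset P' L' (f ` A) \<subseteq> f ` perpset P L A"
  proof
    fix y' assume y': "y' \<in> perpset P' L' (f ` A)"
    then obtain y where y: "y \<in> P" "y' = f y"
      using image_points unfolding T.perpset_eq by blast
    then have "\<forall>a\<in>A. S.orth a y"
      using y' A orth_image_iff unfolding T.perpset_eq by blast
    then show "y' \<in> f ` perpset P L A"
      using y unfolding S.perpset_eq by blast
  qed
  show "f ` perpset P L A \<subseteq> perpset P' L' (f ` A)"
    using A orth_image_iff image_points unfolding S.perpset_eq T.perpset_eq by blast
qed

lemma complete_triad_image_iff: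
  assumes A: "A \<subseteq> P"
  shows "complete_triad P' L' (f ` A) \<longleftrightarrow> complete_triad P L A"
proof -
  have inj_A: "inj_on f A"
    using inj_on_subset[OF inj_f A] .
  have "f ` A \<subseteq> P'"
    using A image_points by blast
  moreover have "\<forall>a\<in>A. \<forall>b\<in>A. T.col (f a) (f b) \<longleftrightarrow> S.col a b"
    using A col_image_iff by blast
  ultimately have "triad P' L' (f ` A) \<longleftrightarrow> triad P L A"
    using A card_image[OF inj_A] inj_on_eq_iff[OF inj_A] unfolding triad_def by auto
  moreover have "card (perpset P' L' (f ` A)) = card (perpset P L A)"
    unfolding perpset_image[OF A]
    by (rule card_image, rule inj_on_subset[OF inj_f]) (auto simp: perpset_def)
  ultimately show ?thesis
    unfolding complete_triad_def by simp
qed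

abbreviation pt :: "'a \<Rightarrow> 'b \<Rightarrow> bool" where
  "pt x u \<equiv> (x, u) \<in> calP P P' L' f"

lemma pt_iff: "pt x u \<longleftrightarrow> x \<in> P \<and> T.orth (f x) u"
  by (simp add: calP_def T.orth_def)

lemma pt_mem: "pt x u \<Longrightarrow> x \<in> P \<and> u \<in> P'"
  unfolding pt_iff T.orth_iff by blast

lemma exists_common_pt_right:
  assumes "x \<in> P" "y \<in> P"
  shows "\<exists>w. pt x w \<and> pt y w"
proof -
  have "f x \<in> P'" "f y \<in> P'"
    using assms image_points by blast+
  then obtain w where "T.orth (f x) w" "T.orth (f y) w"
    using T.exists_common_orth by blast
  then show ?thesis
    using assms pt_iff by blast
qed

lemma exists_common_pt_left:
  assumes "u \<in> P'" "v \<in> P'"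
  shows "\<exists>z. pt z u \<and> pt z v"
proof -
  obtain c where c: "T.orth u c" "T.orth v c"
    using T.exists_common_orth assms by blast
  moreover have "c \<in> P'"
    using c(1) T.orth_iff by blast
  ultimately obtain z where "z \<in> P" "c = f z"
    using image_points by blast
  then show ?thesis
    using c T.orth_sym pt_iff by blast
qed

lemma calL_memI:
  assumes P: "x \<in> P" "y \<in> P" "t \<in> P" and xyt: "x \<noteq> y" "x \<noteq> t" "y \<noteq> t"
    and uvs: "u \<noteq> v" "u \<noteq> s" "v \<noteq> s"
    and kind: "{x, y, t} \<in> L \<or> complete_triad P L {x, y, t}"
    and perp: "perpset P' L' (f ` {x, y, t}) = {u, v, s}"
  shows "{PP x u, PP y v, PP t s} \<in> calL P L P' L' f"
proof -
  have "pt x u" "pt y v" "pt t s"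
    using P perp unfolding calP_def perpset_def by blast+
  then show ?thesis
    unfolding calL_def using xyt uvs kind perp by blast
qed

lemma calL_elim:
  assumes "l \<in> calL P L P' L' f"
  obtains x y z u v w where "l = {PP x u, PP y v, PP z w}"
    "x \<noteq> y" "y \<noteq> z" "x \<noteq> z" "u \<noteq> v" "v \<noteq> w" "u \<noteq> w"
    "\<forall>a\<in>{x, y, z}. \<forall>d\<in>{u, v, w}. pt a d"
proof -
  obtain x y z u v w where l: "l = {PP x u, PP y v, PP z w}"
    and xyz: "x \<noteq> y" "y \<noteq> z" "x \<noteq> z" "{x, y, z} \<subseteq> P"
    and uvw: "u \<noteq> v" "v \<noteq> w" "u \<noteq> w" "{u, v, w} = perpset P' L' (f ` {x, y, z})"
    using assms unfolding calL_def calP_def by blast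
  have "\<forall>a\<in>{x, y, z}. \<forall>d\<in>{u, v, w}. pt a d"
    using xyz(4) unfolding uvw(4) perpset_def calP_def by blast
  then show thesis
    using that l xyz uvw by blast
qed

lemma calL_PP_PP:
  assumes "l \<in> calL P L P' L' f" "PP a b \<in> l" "PP c d \<in> l" "PP a b \<noteq> PP c d"
  shows "a \<noteq> c \<and> b \<noteq> d \<and> pt a d"
  using assms(1)
proof (rule calL_elim)
  fix x y z u v w
  assume "l = {PP x u, PP y v, PP z w}" "x \<noteq> y" "y \<noteq> z" "x \<noteq> z" "u \<noteq> v" "v \<noteq> w" "u \<noteq> w"
    "\<forall>a\<in>{x, y, z}. \<forall>d\<in>{u, v, w}. pt a d"
  then show ?thesis
    using assms(2-4) by auto
qed

lemma calL_no_PA_PB: "l \<in> calL P L P' L' f \<Longrightarrow> PA a \<notin> l \<and> PB b \<notin> l"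
  unfolding calL_def by auto

abbreviation "BP \<equiv> bbP P P' L' f"
abbreviation "BL \<equiv> bbL P L P' L' f"
abbreviation "bcol \<equiv> collinear BP BL"

lemma mem_BP_iff [simp]:
  "PP x u \<in> BP \<longleftrightarrow> pt x u" "PA a \<in> BP \<longleftrightarrow> a \<in> P" "PB b \<in> BP \<longleftrightarrow> b \<in> P'"
  unfolding bbP_def by auto

lemma bcol_iff: "bcol \<alpha> \<beta> \<longleftrightarrow> \<alpha> \<noteq> \<beta> \<and> \<alpha> \<in> BP \<and> \<beta> \<in> BP \<and>
    ((\<exists>l\<in>calL P L P' L' f. \<alpha> \<in> l \<and> \<beta> \<in> l)
     \<or> (\<exists>x u. pt x u \<and> \<alpha> \<in> {PA x, PP x u, PB u} \<and> \<beta> \<in> {PA x, PP x u, PB u}))"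
  unfolding collinear_def bbL_def by blast

lemma bcol_PA_PA [simp]: "\<not> bcol (PA a) (PA b)"
  unfolding bcol_iff using calL_no_PA_PB by blast

lemma bcol_PB_PB [simp]: "\<not> bcol (PB a) (PB b)"
  unfolding bcol_iff using calL_no_PA_PB by blast

lemma bcol_PA_PB [simp]: "bcol (PA a) (PB b) \<longleftrightarrow> pt a b"
  unfolding bcol_iff using calL_no_PA_PB pt_mem by auto

lemma bcol_PA_PP [simp]: "bcol (PA a) (PP y v) \<longleftrightarrow> a = y \<and> pt y v"
  unfolding bcol_iff using calL_no_PA_PB pt_mem by auto

lemma bcol_PB_PP [simp]: "bcol (PB b) (PP y v) \<longleftrightarrow> b = v \<and> pt y v"
  unfolding bcol_iff using calL_no_PA_PB pt_mem by auto

lemma exists_calL_line: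
  assumes xy: "x \<noteq> y" and uv: "u \<noteq> v" and pts: "pt x u" "pt y v" "pt x v" "pt y u"
  shows "\<exists>t s. {PP x u, PP y v, PP t s} \<in> calL P L P' L' f"
proof -
  have P: "x \<in> P" "y \<in> P" and orth: "T.orth (f x) u" "T.orth (f y) u" "T.orth (f x) v" "T.orth (f y) v"
    using pts pt_iff by blast+
  have "f x \<noteq> f y"
    using inj_f P xy unfolding inj_on_def by blast
  then obtain c s where cs: "c \<noteq> f x" "c \<noteq> f y" "s \<noteq> u" "s \<noteq> v"
    and kind: "{f x, f y, c} \<in> L' \<or> complete_triad P' L' {f x, f y, c}"
    and perp: "perpset P' L' {f x, f y, c} = {u, v, s}"
    using T.exists_line_or_complete_triad[OF _ uv orth] by blast
  have "c \<in> P'"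
    using kind T.line_subset unfolding complete_triad_def triad_def by blast
  then obtain t where t: "t \<in> P" "c = f t"
    using image_points by blast
  then have image: "f ` {x, y, t} = {f x, f y, c}"
    by simp
  have "{x, y, t} \<in> L \<or> complete_triad P L {x, y, t}"
    using kind line_image_iff[of "{x, y, t}"] complete_triad_image_iff[of "{x, y, t}"] P t(1) image
    by simp
  moreover have "t \<noteq> x" "t \<noteq> y"
    using cs(1,2) t(2) by blast+
  ultimately show ?thesis
    using calL_memI[OF P t(1) xy _ _ uv cs(3,4)[symmetric]] perp image by metis
qed

lemma bcol_PP_PP [simp]:
  "bcol (PP x u) (PP y v) \<longleftrightarrow> x \<noteq> y \<and> u \<noteq> v \<and> pt x u \<and> pt y v \<and> pt x v \<and> pt y u"
proof
  assume col: "bcol (PP x u) (PP y v)"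
  then have pts: "pt x u" "pt y v" and ne: "PP x u \<noteq> PP y v"
    unfolding bcol_iff by auto
  obtain l where "l \<in> calL P L P' L' f" "PP x u \<in> l" "PP y v \<in> l"
    using col unfolding bcol_iff by auto
  then have "x \<noteq> y \<and> u \<noteq> v \<and> pt x v" "pt y u"
    using calL_PP_PP ne by blast+
  then show "x \<noteq> y \<and> u \<noteq> v \<and> pt x u \<and> pt y v \<and> pt x v \<and> pt y u"
    using pts by blast
next
  assume h: "x \<noteq> y \<and> u \<noteq> v \<and> pt x u \<and> pt y v \<and> pt x v \<and> pt y u"
  then obtain t s where "{PP x u, PP y v, PP t s} \<in> calL P L P' L' f"
    using exists_calL_line by blast
  then show "bcol (PP x u) (PP y v)"
    using h unfolding bcol_iff by auto
qed

lemma bcol_PB_PA [simp]: "bcol (PB b) (PA a) \<longleftrightarrow> pt a b"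
  using collinear_sym[of BP BL "PB b" "PA a"] collinear_sym[of BP BL "PA a" "PB b"] by auto

lemma bcol_PP_PA [simp]: "bcol (PP y v) (PA a) \<longleftrightarrow> a = y \<and> pt y v"
  using collinear_sym[of BP BL "PP y v" "PA a"] collinear_sym[of BP BL "PA a" "PP y v"] by auto

lemma bcol_PP_PB [simp]: "bcol (PP y v) (PB b) \<longleftrightarrow> b = v \<and> pt y v"
  using collinear_sym[of BP BL "PP y v" "PB b"] collinear_sym[of BP BL "PB b" "PP y v"] by auto

lemma common_neighbour_PP_PP:
  assumes "bcol (PP y v) c" "bcol c (PP x u)" "x \<noteq> y" "u \<noteq> v" "pt x v"
  shows "pt y u"
proof (cases c)
  case (PP a b)
  with assms have "a \<noteq> x" "a \<noteq> y" "b \<noteq> u" "b \<noteq> v"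
    and "pt x u" "pt x b" "pt a u" "pt a v" "pt a b" "pt y v" "pt y b"
    by auto
  moreover have "f x \<noteq> f y" "f x \<noteq> f a" "f y \<noteq> f a"
    using inj_f calculation assms(3) pt_mem unfolding inj_on_def by metis+
  ultimately show ?thesis
    using T.grid_completion[of "f x" "f y" "f a" u v b] assms(4,5) pt_iff by metis
qed (use assms in auto)

lemma unique_nearest_from_PA:
  assumes xu: "pt x u" and y: "y \<in> P" "y \<noteq> x"
  shows "unique_nearest BP BL (PA y) {PA x, PP x u, PB u}"
proof (cases "pt y u")
  case True
  then show ?thesis
    using y by (intro unique_nearest_collinear[where p = "PB u"]) auto
next
  case False
  obtain w where w: "pt x w" "pt y w"
    using exists_common_pt_right xu y pt_mem by blast
  show ?thesis
  proof (rule unique_nearest_common_neighbour[where p = "PA x" and c = "PB w"])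
    fix q d assume "q \<in> {PA x, PP x u, PB u}" "q \<noteq> PA x"
    then show "\<not> (bcol (PA y) d \<and> bcol d q)"
      using False by (cases d) auto
  qed (use False y xu w in auto)
qed

lemma unique_nearest_from_PB:
  assumes xu: "pt x u" and v: "v \<in> P'" "v \<noteq> u"
  shows "unique_nearest BP BL (PB v) {PA x, PP x u, PB u}"
proof (cases "pt x v")
  case True
  then show ?thesis
    using v by (intro unique_nearest_collinear[where p = "PA x"]) auto
next
  case False
  obtain z where z: "pt z u" "pt z v"
    using exists_common_pt_left xu v pt_mem by blast
  show ?thesis
  proof (rule unique_nearest_common_neighbour[where p = "PB u" and c = "PA z"])
    fix q d assume "q \<in> {PA x, PP x u, PB u}" "q \<noteq> PB u"
    then show "\<not> (bcol (PB v) d \<and> bcol d q)"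
      using False by (cases d) auto
  qed (use False v xu z in auto)
qed

lemma unique_nearest_from_PP_via_PB:
  assumes xu: "pt x u" and yv: "pt y v" and "y \<noteq> x" "v \<noteq> u" "pt x v" "\<not> pt y u"
  shows "unique_nearest BP BL (PP y v) {PA x, PP x u, PB u}"
proof (rule unique_nearest_common_neighbour[where p = "PA x" and c = "PB v"])
  fix q d assume "q \<in> {PA x, PP x u, PB u}" "q \<noteq> PA x"
  then show "\<not> (bcol (PP y v) d \<and> bcol d q)"
    using assms common_neighbour_PP_PP[of y v d x u] by (cases d) auto
qed (use assms in auto)

lemma unique_nearest_from_PP_via_PA:
  assumes xu: "pt x u" and yv: "pt y v" and "y \<noteq> x" "v \<noteq> u" "\<not> pt x v" "pt y u"
  shows "unique_nearest BP BL (PP y v) {PA x, PP x u, PB u}"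
proof (rule unique_nearest_common_neighbour[where p = "PB u" and c = "PA y"])
  fix q d assume "q \<in> {PA x, PP x u, PB u}" "q \<noteq> PB u"
  then show "\<not> (bcol (PP y v) d \<and> bcol d q)"
    using assms common_neighbour_PP_PP[of x u d y v] collinear_sym by (cases d) auto
qed (use assms in auto)

lemma unique_nearest_from_PP_via_PP:
  assumes xu: "pt x u" and yv: "pt y v" and "y \<noteq> x" "v \<noteq> u" "\<not> pt x v" "\<not> pt y u"
  shows "unique_nearest BP BL (PP y v) {PA x, PP x u, PB u}"
proof -
  obtain z w where zw: "T.orth z u" "T.orth z v" "T.orth (f x) w" "T.orth (f y) w" "T.orth z w"
    using T.exists_bridge xu yv assms(5,6) pt_iff by meson
  moreover have "z \<in> P'"
    using zw(1) T.orth_iff by blast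
  ultimately obtain z' where z'w: "pt z' u" "pt z' v" "pt x w" "pt y w" "pt z' w"
    using image_points xu yv pt_iff by auto
  show ?thesis
  proof (rule unique_nearest_common_neighbour[where p = "PP x u" and c = "PP z' w"])
    fix q d assume "q \<in> {PA x, PP x u, PB u}" "q \<noteq> PP x u"
    then show "\<not> (bcol (PP y v) d \<and> bcol d q)"
      using assms by (cases d) auto
  qed (use assms z'w in auto)
qed

lemma unique_nearest_from_PP:
  assumes xu: "pt x u" and yv: "pt y v" "(y, v) \<noteq> (x, u)"
  shows "unique_nearest BP BL (PP y v) {PA x, PP x u, PB u}"
proof -
  consider "y = x" | "v = u" | "y \<noteq> x" "v \<noteq> u" "pt x v" "pt y u"
    | "y \<noteq> x" "v \<noteq> u" "pt x v" "\<not> pt y u" | "y \<noteq> x" "v \<noteq> u" "\<not> pt x v" "pt y u"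
    | "y \<noteq> x" "v \<noteq> u" "\<not> pt x v" "\<not> pt y u"
    by blast
  then show ?thesis
  proof cases
    case 1
    then show ?thesis
      using yv by (intro unique_nearest_collinear[where p = "PA x"]) auto
  next
    case 2
    then show ?thesis
      using yv by (intro unique_nearest_collinear[where p = "PB u"]) auto
  next
    case 3
    then show ?thesis
      using xu yv by (intro unique_nearest_collinear[where p = "PP x u"]) auto
  qed (use xu yv unique_nearest_from_PP_via_PB unique_nearest_from_PP_via_PA
      unique_nearest_from_PP_via_PP in blast)+
qed

lemma unique_nearest_on_line:
  assumes "pt x u" "\<alpha> \<in> BP" "\<alpha> \<notin> {PA x, PP x u, PB u}"
  shows "unique_nearest BP BL \<alpha> {PA x, PP x u, PB u}"
  using assms unique_nearest_from_PA unique_nearest_from_PB unique_nearest_from_PP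
  by (cases \<alpha>) auto

end

theorem proposition4p6:
  fixes P :: "'a set" and L :: "'a set set" and P' :: "'b set" and L' :: "'b set set"
    and f :: "'a \<Rightarrow> 'b" and x :: 'a and u :: 'b and \<alpha> :: "('a, 'b) spoint"
  assumes "GQ22 P L" and "GQ22 P' L'" and "geom_iso f P L P' L'"
    and "(x, u) \<in> calP P P' L' f"
    and "\<alpha> \<in> bbP P P' L' f"
    and "\<alpha> \<notin> {PA x, PP x u, PB u}"
  shows "\<exists>!p. p \<in> {PA x, PP x u, PB u} \<and>
           (\<forall>q \<in> {PA x, PP x u, PB u}.
              gdist (bbP P P' L' f) (bbL P L P' L' f) \<alpha> p
                \<le> gdist (bbP P P' L' f) (bbL P L P' L' f) \<alpha> q)"
proof -
  interpret gq22_iso P L P' L' f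
    using assms(1-3) by (simp add: gq22_iso_def gq22_iso_axioms_def gq22_def)
  show ?thesis
    using unique_nearest_on_line[OF assms(4-6)] unfolding unique_nearest_def .
qed

end
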